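(* Let $f$ be an entire function on $\mathbb{C}$ which is not identically zero. Then the vector-valued holomorphic functions $\Phi_f$ and $\Psi_f$ on $\mathbb{C}^k$ are not identically zero.
   Context: Fix an integer $k\ge 2$. Use coordinates $s=(s_1,\dots,s_k)$ on $\mathbb{C}^k$, set $s_0:=1$, $P_s(z):=\sum_{h=0}^k(-1)^hs_hz^{k-h}$ and $P_s'(z):=\partial_zP_s(z)$. Let $E(z):=(1,z,\dots,z^{k-1})^T$. For an entire function $f$, define the $\mathbb{C}^k$-valued holomorphic functions $$\Phi_f(s):=\frac{1}{2i\pi}\int_{|\zeta|=R}\frac{f(\zeta)E(\zeta)\,d\zeta}{P_s(\zeta)},\qquad \Psi_f(s):=\frac{1}{2i\pi}\int_{|\zeta|=R}\frac{f(\zeta)E(\zeta)P'_s(\zeta)\,d\zeta}{P_s(\zeta)},$$ where $R$ is large enough that all roots of $P_s$ lie in $\{|\zeta|<R\}$ (the integrals do not depend on such $R$). *)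

theory Defs
  imports "HOL-Complex_Analysis.Complex_Analysis"
begin

text \<open>Coordinates s = (s_1,...,s_k) of C^k are encoded as a function nat => complex;
  only the values s 1, ..., s k matter, and s_0 := 1 is imposed in the definition.\<close>

definition coordP :: "(nat \<Rightarrow> complex) \<Rightarrow> nat \<Rightarrow> complex" where
  "coordP s h = (if h = 0 then 1 else s h)"

definition Ppoly :: "nat \<Rightarrow> (nat \<Rightarrow> complex) \<Rightarrow> complex \<Rightarrow> complex" where
  "Ppoly k s z = (\<Sum>h=0..k. (-1)^h * coordP s h * z ^ (k - h))"

text \<open>A radius strictly exceeding the modulus of every root (Cauchy bound);
  the integrals do not depend on any such choice.\<close>
definition rootRadius :: "nat \<Rightarrow> (nat \<Rightarrow> complex) \<Rightarrow> real" where
  "rootRadius k s = 1 + (\<Sum>h=1..k. cmod (s h))"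

definition PhiF :: "nat \<Rightarrow> (complex \<Rightarrow> complex) \<Rightarrow> (nat \<Rightarrow> complex) \<Rightarrow> nat \<Rightarrow> complex" where
  "PhiF k f s j = contour_integral (circlepath 0 (rootRadius k s))
      (\<lambda>\<zeta>. f \<zeta> * \<zeta> ^ j / Ppoly k s \<zeta>) / (2 * \<i> * pi)"

definition PsiF :: "nat \<Rightarrow> (complex \<Rightarrow> complex) \<Rightarrow> (nat \<Rightarrow> complex) \<Rightarrow> nat \<Rightarrow> complex" where
  "PsiF k f s j = contour_integral (circlepath 0 (rootRadius k s))
      (\<lambda>\<zeta>. f \<zeta> * \<zeta> ^ j * deriv (Ppoly k s) \<zeta> / Ppoly k s \<zeta>) / (2 * \<i> * pi)"

end

theory Submission
  imports Defs
begin

text \<open>Pick a with f a \<noteq> 0. For the s with P_s(z) = z^(k-1) (z - a), the last component of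
  Phi_f has integrand f(z)/(z - a), so by Cauchy's formula it equals f a. For the s with
  P_s(z) = (z - a)^k, the logarithmic derivative P_s'/P_s is k/(z - a), so the first component
  of Psi_f equals k f a.\<close>

lemma contour_integral_circlepath_simple_pole:
  fixes f g :: "complex \<Rightarrow> complex"
  assumes holf: "f holomorphic_on cball 0 R" and a: "cmod a < R"
    and g: "\<And>u. cmod u = R \<Longrightarrow> g u = c * (f u / (u - a))"
  shows "contour_integral (circlepath 0 R) g / (2 * \<i> * pi) = c * f a"
proof -
  have "R \<ge> 0" using a norm_ge_zero[of a] by linarith
  then have "contour_integral (circlepath 0 R) g
      = contour_integral (circlepath 0 R) (\<lambda>u. c * (f u / (u - a)))"
    by (intro contour_integral_eq) (simp add: g)
  also have "\<dots> = c * (2 * of_real pi * \<i> * f a)"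
    using a by (intro contour_integral_unique has_contour_integral_lmul
        Cauchy_integral_circlepath_simple[OF holf]) simp
  finally show ?thesis by (simp add: field_simps)
qed

lemma norm_coeff_less_rootRadius:
  assumes "i \<in> {1..k}"
  shows "cmod (s i) < rootRadius k s"
  using member_le_sum[OF assms, of "\<lambda>h. cmod (s h)"] unfolding rootRadius_def by simp

lemma Ppoly_single_coeff:
  assumes "k \<ge> 1"
  shows "Ppoly k (\<lambda>h. if h = 1 then a else 0) z = z ^ (k - 1) * (z - a)"
proof -
  have "Ppoly k (\<lambda>h. if h = 1 then a else 0) z
      = (\<Sum>h=0..k. if h = 0 then z ^ k else if h = 1 then - a * z ^ (k - 1) else 0)"
    unfolding Ppoly_def coordP_def by (rule sum.cong) auto
  also have "\<dots> = z ^ k - a * z ^ (k - 1)"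
    using assms by (simp add: sum.If_cases)
  also have "\<dots> = z ^ (k - 1) * (z - a)"
    using assms by (cases k) (simp_all add: algebra_simps)
  finally show ?thesis .
qed

lemma Ppoly_binomial_coeffs:
  "Ppoly k (\<lambda>h. of_nat (k choose h) * a ^ h) = (\<lambda>z. (z - a) ^ k)"
proof
  fix z
  have "(z - a) ^ k = (\<Sum>h\<le>k. of_nat (k choose h) * (-a) ^ h * z ^ (k - h))"
    using binomial_ring[of "-a" z k] by simp
  also have "\<dots> = Ppoly k (\<lambda>h. of_nat (k choose h) * a ^ h) z"
    unfolding Ppoly_def coordP_def atMost_atLeast0
    by (rule sum.cong) (simp_all add: power_minus[of a])
  finally show "Ppoly k (\<lambda>h. of_nat (k choose h) * a ^ h) z = (z - a) ^ k" ..
qed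

lemma PhiF_single_coeff:
  assumes k: "k \<ge> 1" and holf: "f holomorphic_on UNIV"
  shows "PhiF k f (\<lambda>h. if h = 1 then a else 0) (k - 1) = f a"
proof -
  let ?s = "\<lambda>h. if h = 1 then a else 0"
  have a: "cmod a < rootRadius k ?s"
    using norm_coeff_less_rootRadius[of 1 k ?s] k by simp
  have "PhiF k f ?s (k - 1) = 1 * f a"
    unfolding PhiF_def
  proof (rule contour_integral_circlepath_simple_pole[OF holomorphic_on_subset[OF holf] a])
    fix u :: complex
    assume "cmod u = rootRadius k ?s"
    with a have "u \<noteq> 0" by auto
    then show "f u * u ^ (k - 1) / Ppoly k ?s u = 1 * (f u / (u - a))"
      unfolding Ppoly_single_coeff[OF k] by simp
  qed simp
  then show ?thesis by simp
qed

lemma PsiF_binomial_coeffs: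
  assumes k: "k \<ge> 1" and holf: "f holomorphic_on UNIV"
  shows "PsiF k f (\<lambda>h. of_nat (k choose h) * a ^ h) 0 = of_nat k * f a"
proof -
  let ?s = "\<lambda>h. of_nat (k choose h) * a ^ h :: complex"
  have "cmod a \<le> cmod (?s 1)"
    using k by (simp add: norm_mult mult_le_cancel_right1)
  also have "\<dots> < rootRadius k ?s"
    using norm_coeff_less_rootRadius[of 1 k ?s] k by simp
  finally have a: "cmod a < rootRadius k ?s" .
  have deriv_power: "deriv (\<lambda>z. (z - a) ^ k) u = of_nat k * (u - a) ^ (k - 1)" for u
    by (rule DERIV_imp_deriv) (auto intro!: derivative_eq_intros)
  show ?thesis
    unfolding PsiF_def
  proof (rule contour_integral_circlepath_simple_pole[OF holomorphic_on_subset[OF holf] a])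
    fix u :: complex
    assume "cmod u = rootRadius k ?s"
    with a have "u - a \<noteq> 0" by auto
    moreover have "(u - a) ^ k = (u - a) ^ (k - 1) * (u - a)"
      using k by (cases k) simp_all
    ultimately show "f u * u ^ 0 * deriv (Ppoly k ?s) u / Ppoly k ?s u
        = of_nat k * (f u / (u - a))"
      by (simp add: Ppoly_binomial_coeffs deriv_power)
  qed simp
qed

theorem mainTheorem2:
  fixes k :: nat and f :: "complex \<Rightarrow> complex"
  assumes "k \<ge> 2"
    and "f holomorphic_on UNIV"
    and "\<exists>z. f z \<noteq> 0"
  shows "(\<exists>s. \<exists>j<k. PhiF k f s j \<noteq> 0) \<and> (\<exists>s. \<exists>j<k. PsiF k f s j \<noteq> 0)"
proof -
  obtain a where fa: "f a \<noteq> 0" using assms(3) by blast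
  have k: "k \<ge> 1" using assms(1) by simp
  have "PhiF k f (\<lambda>h. if h = 1 then a else 0) (k - 1) \<noteq> 0"
    using PhiF_single_coeff[OF k assms(2)] fa by simp
  moreover have "PsiF k f (\<lambda>h. of_nat (k choose h) * a ^ h) 0 \<noteq> 0"
    using PsiF_binomial_coeffs[OF k assms(2)] fa k by simp
  ultimately show ?thesis using k by (metis diff_less less_le_trans zero_less_one)
qed

end
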